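(* Let $(V,E)$ be a graph with $k$ cliques and $\ell$ cocliques. Then there is a UFA with $|V|$ states whose forward determinization has at least $k$ states and whose backward determinization has at least $\ell$ states.
   Context: A graph is a finite simple undirected graph $(V,E)$. A clique is a set $X\subseteq V$ with every two distinct vertices adjacent; a coclique is a set $Y\subseteq V$ with no two distinct vertices adjacent (the empty set counts as both). A UFA is an NFA $(Q,\Sigma,\delta,I,F)$ (finite states, finite alphabet, transitions $\delta\subseteq Q\times\Sigma\times Q$, initial states $I$, accepting states $F$) in which every word has at most one accepting run. For $S\subseteq Q$, $w\in\Sigma^*$: $\delta(S,w)=\{r\mid\exists q\in S.\ q\xrightarrow{w}r\}$, $\delta^{-1}(w,S)=\{r\mid \exists q\in S.\ r\xrightarrow{w} q\}$. The forward determinization has state set $\{\delta(I,w)\mid w\in\Sigma^*\}$; the backward determinization has state set $\{\delta^{-1}(w,F)\mid w\in\Sigma^*\}$. *)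

theory Defs
  imports Main
begin

definition simple_graph :: "'v set \<Rightarrow> 'v set set \<Rightarrow> bool" where
  "simple_graph V E \<longleftrightarrow> finite V \<and>
     (\<forall>e\<in>E. \<exists>u v. u \<in> V \<and> v \<in> V \<and> u \<noteq> v \<and> e = {u, v})"

definition is_clique :: "'v set \<Rightarrow> 'v set set \<Rightarrow> 'v set \<Rightarrow> bool" where
  "is_clique V E X \<longleftrightarrow> X \<subseteq> V \<and> (\<forall>x\<in>X. \<forall>y\<in>X. x \<noteq> y \<longrightarrow> {x, y} \<in> E)"

definition is_coclique :: "'v set \<Rightarrow> 'v set set \<Rightarrow> 'v set \<Rightarrow> bool" where
  "is_coclique V E Y \<longleftrightarrow> Y \<subseteq> V \<and> (\<forall>x\<in>Y. \<forall>y\<in>Y. x \<noteq> y \<longrightarrow> {x, y} \<notin> E)"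

definition nfa :: "'q set \<Rightarrow> 'a set \<Rightarrow> ('q \<times> 'a \<times> 'q) set \<Rightarrow> 'q set \<Rightarrow> 'q set \<Rightarrow> bool" where
  "nfa Q \<Sigma> \<delta> I F \<longleftrightarrow> finite Q \<and> finite \<Sigma> \<and> \<delta> \<subseteq> Q \<times> \<Sigma> \<times> Q \<and> I \<subseteq> Q \<and> F \<subseteq> Q"

definition accepting_run :: "('q \<times> 'a \<times> 'q) set \<Rightarrow> 'q set \<Rightarrow> 'q set \<Rightarrow> 'a list \<Rightarrow> 'q list \<Rightarrow> bool" where
  "accepting_run \<delta> I F w qs \<longleftrightarrow> length qs = Suc (length w) \<and> hd qs \<in> I \<and> last qs \<in> F \<and>
     (\<forall>i < length w. (qs ! i, w ! i, qs ! Suc i) \<in> \<delta>)"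

definition ufa :: "'q set \<Rightarrow> 'a set \<Rightarrow> ('q \<times> 'a \<times> 'q) set \<Rightarrow> 'q set \<Rightarrow> 'q set \<Rightarrow> bool" where
  "ufa Q \<Sigma> \<delta> I F \<longleftrightarrow> nfa Q \<Sigma> \<delta> I F \<and>
     (\<forall>w \<in> lists \<Sigma>. \<forall>qs qs'. accepting_run \<delta> I F w qs \<longrightarrow> accepting_run \<delta> I F w qs' \<longrightarrow> qs = qs')"

fun steps :: "('q \<times> 'a \<times> 'q) set \<Rightarrow> 'a list \<Rightarrow> ('q \<times> 'q) set" where
  "steps \<delta> [] = Id"
| "steps \<delta> (a # w) = {(p, q). \<exists>r. (p, a, r) \<in> \<delta> \<and> (r, q) \<in> steps \<delta> w}"

definition delta_set :: "('q \<times> 'a \<times> 'q) set \<Rightarrow> 'q set \<Rightarrow> 'a list \<Rightarrow> 'q set" where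
  "delta_set \<delta> S w = {r. \<exists>q\<in>S. (q, r) \<in> steps \<delta> w}"

definition delta_inv :: "('q \<times> 'a \<times> 'q) set \<Rightarrow> 'a list \<Rightarrow> 'q set \<Rightarrow> 'q set" where
  "delta_inv \<delta> w S = {r. \<exists>q\<in>S. (r, q) \<in> steps \<delta> w}"

definition forward_det_states :: "'a set \<Rightarrow> ('q \<times> 'a \<times> 'q) set \<Rightarrow> 'q set \<Rightarrow> 'q set set" where
  "forward_det_states \<Sigma> \<delta> I = {delta_set \<delta> I w | w. w \<in> lists \<Sigma>}"

definition backward_det_states :: "'a set \<Rightarrow> ('q \<times> 'a \<times> 'q) set \<Rightarrow> 'q set \<Rightarrow> 'q set set" where
  "backward_det_states \<Sigma> \<delta> F = {delta_inv \<delta> w F | w. w \<in> lists \<Sigma>}"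

end

theory Submission
  imports Defs
begin

text \<open>Use the vertices as states and one letter (A, B) for every clique A and coclique B, reading
  which leads from every state of B to every state of A. A state strictly inside an accepting run
  lies in A \<inter> B for two consecutive letters (A, _), (_, B); since a clique and a coclique share at
  most one vertex, the run is determined by the word. Starting from a singleton {q}, which is
  both a clique and a coclique, the letter (A, {q}) reaches exactly A, and reading
  ({q}, B) backwards reaches exactly B.\<close>

definition meets_in_at_most_one :: "'q set set \<Rightarrow> 'q set set \<Rightarrow> bool" where
  "meets_in_at_most_one \<C> \<D> \<longleftrightarrow>
     (\<forall>A\<in>\<C>. \<forall>B\<in>\<D>. \<forall>x\<in>A \<inter> B. \<forall>y\<in>A \<inter> B. x = y)"

lemma meets_in_at_most_one_cliques_cocliques:
  "meets_in_at_most_one {X. is_clique V E X} {Y. is_coclique V E Y}"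
  unfolding meets_in_at_most_one_def is_clique_def is_coclique_def by blast

lemma meets_in_at_most_one_image:
  assumes "meets_in_at_most_one \<C> \<D>" "inj_on f V" "\<C> \<subseteq> Pow V" "\<D> \<subseteq> Pow V"
  shows "meets_in_at_most_one ((`) f ` \<C>) ((`) f ` \<D>)"
  unfolding meets_in_at_most_one_def
proof (intro ballI)
  fix A' B' x' y'
  assume "A' \<in> (`) f ` \<C>" "B' \<in> (`) f ` \<D>" and xy: "x' \<in> A' \<inter> B'" "y' \<in> A' \<inter> B'"
  then obtain A B where AB: "A \<in> \<C>" "B \<in> \<D>" "A' = f ` A" "B' = f ` B" by blast
  moreover have "A \<subseteq> V" "B \<subseteq> V"
    using AB assms(3,4) by auto
  ultimately have "A' \<inter> B' = f ` (A \<inter> B)"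
    using inj_on_image_Int[OF assms(2)] by simp
  with xy obtain x y where xy': "x \<in> A \<inter> B" "y \<in> A \<inter> B" "x' = f x" "y' = f y"
    by (metis imageE)
  have "x = y"
    using assms(1) AB(1,2) xy'(1,2) unfolding meets_in_at_most_one_def by blast
  then show "x' = y'"
    using xy' by simp
qed

lemma steps_in_states:
  assumes "\<delta> \<subseteq> Q \<times> \<Sigma> \<times> Q" "(p, q) \<in> steps \<delta> w" "w \<noteq> []"
  shows "p \<in> Q \<and> q \<in> Q"
  using assms(2,3)
proof (induction w arbitrary: p)
  case Nil
  then show ?case by simp
next
  case (Cons a w)
  then obtain r where r: "(p, a, r) \<in> \<delta>" "(r, q) \<in> steps \<delta> w" by auto
  show ?case
  proof (cases "w = []")
    case True
    with r assms(1) show ?thesis by auto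
  next
    case False
    with r Cons.IH assms(1) show ?thesis by blast
  qed
qed

lemma delta_set_subset:
  assumes "\<delta> \<subseteq> Q \<times> \<Sigma> \<times> Q"
  shows "delta_set \<delta> S w \<subseteq> S \<union> Q"
  using steps_in_states[OF assms] by (cases "w = []") (auto simp: delta_set_def)

lemma delta_inv_subset:
  assumes "\<delta> \<subseteq> Q \<times> \<Sigma> \<times> Q"
  shows "delta_inv \<delta> w S \<subseteq> S \<union> Q"
  using steps_in_states[OF assms] by (cases "w = []") (auto simp: delta_inv_def)

lemma finite_forward_det_states:
  assumes "nfa Q \<Sigma> \<delta> I F"
  shows "finite (forward_det_states \<Sigma> \<delta> I)"
proof (rule finite_subset)
  have "delta_set \<delta> I w \<subseteq> Q" for w
    using assms delta_set_subset[of \<delta> Q \<Sigma> I w] by (auto simp: nfa_def)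
  then show "forward_det_states \<Sigma> \<delta> I \<subseteq> Pow Q"
    by (auto simp: forward_det_states_def)
  show "finite (Pow Q)"
    using assms by (simp add: nfa_def)
qed

lemma finite_backward_det_states:
  assumes "nfa Q \<Sigma> \<delta> I F"
  shows "finite (backward_det_states \<Sigma> \<delta> F)"
proof (rule finite_subset)
  have "delta_inv \<delta> w F \<subseteq> Q" for w
    using assms delta_inv_subset[of \<delta> Q \<Sigma> w F] by (auto simp: nfa_def)
  then show "backward_det_states \<Sigma> \<delta> F \<subseteq> Pow Q"
    by (auto simp: backward_det_states_def)
  show "finite (Pow Q)"
    using assms by (simp add: nfa_def)
qed

definition pair_delta :: "'a set \<Rightarrow> ('a \<Rightarrow> 'q set \<times> 'q set) \<Rightarrow> ('q \<times> 'a \<times> 'q) set" where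
  "pair_delta \<Sigma> letter = {(p, a, q). a \<in> \<Sigma> \<and> p \<in> snd (letter a) \<and> q \<in> fst (letter a)}"

lemma pair_delta_subset:
  "letter ` \<Sigma> \<subseteq> Pow Q \<times> Pow Q \<Longrightarrow> pair_delta \<Sigma> letter \<subseteq> Q \<times> \<Sigma> \<times> Q"
  unfolding pair_delta_def by (force simp: mem_Times_iff)

lemma fst_letter_in_forward_det_states:
  assumes "a \<in> \<Sigma>" "S \<inter> snd (letter a) \<noteq> {}"
  shows "fst (letter a) \<in> forward_det_states \<Sigma> (pair_delta \<Sigma> letter) S"
proof -
  have "delta_set (pair_delta \<Sigma> letter) S [a] = fst (letter a)"
    using assms by (auto simp: delta_set_def pair_delta_def)
  with \<open>a \<in> \<Sigma>\<close> show ?thesis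
    unfolding forward_det_states_def by (intro CollectI exI[of _ "[a]"]) simp
qed

lemma snd_letter_in_backward_det_states:
  assumes "a \<in> \<Sigma>" "S \<inter> fst (letter a) \<noteq> {}"
  shows "snd (letter a) \<in> backward_det_states \<Sigma> (pair_delta \<Sigma> letter) S"
proof -
  have "delta_inv (pair_delta \<Sigma> letter) [a] S = snd (letter a)"
    using assms by (auto simp: delta_inv_def pair_delta_def)
  with \<open>a \<in> \<Sigma>\<close> show ?thesis
    unfolding backward_det_states_def by (intro CollectI exI[of _ "[a]"]) simp
qed

lemma accepting_run_pair_delta_inner:
  assumes "accepting_run (pair_delta \<Sigma> letter) I F w qs" "Suc i < length w"
  shows "qs ! Suc i \<in> fst (letter (w ! i)) \<inter> snd (letter (w ! Suc i))"
    and "w ! i \<in> \<Sigma>" and "w ! Suc i \<in> \<Sigma>"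
proof -
  have "(qs ! i, w ! i, qs ! Suc i) \<in> pair_delta \<Sigma> letter"
    and "(qs ! Suc i, w ! Suc i, qs ! Suc (Suc i)) \<in> pair_delta \<Sigma> letter"
    using assms by (auto simp: accepting_run_def)
  then show "qs ! Suc i \<in> fst (letter (w ! i)) \<inter> snd (letter (w ! Suc i))"
    and "w ! i \<in> \<Sigma>" and "w ! Suc i \<in> \<Sigma>"
    by (auto simp: pair_delta_def)
qed

lemma accepting_runs_pair_delta_unique:
  assumes meet: "meets_in_at_most_one \<C> \<D>" and letters: "letter ` \<Sigma> \<subseteq> \<C> \<times> \<D>"
    and runs: "accepting_run (pair_delta \<Sigma> letter) {q} {q} w qs"
      "accepting_run (pair_delta \<Sigma> letter) {q} {q} w qs'"
  shows "qs = qs'"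
proof (rule nth_equalityI)
  have len: "length qs = Suc (length w)" "length qs' = Suc (length w)"
    using runs by (auto simp: accepting_run_def)
  then have "qs \<noteq> []" "qs' \<noteq> []" by auto
  from len show "length qs = length qs'" by simp
  fix i assume "i < length qs"
  then consider "i = 0" | "i = length w" | j where "i = Suc j" "Suc j < length w"
    using len by (metis less_Suc_eq not0_implies_Suc)
  then show "qs ! i = qs' ! i"
  proof cases
    case 1
    with runs \<open>qs \<noteq> []\<close> \<open>qs' \<noteq> []\<close> show ?thesis
      by (auto simp: accepting_run_def hd_conv_nth)
  next
    case 2
    with runs \<open>qs \<noteq> []\<close> \<open>qs' \<noteq> []\<close> len show ?thesis
      by (auto simp: accepting_run_def last_conv_nth)
  next
    case 3
    have "letter (w ! j) \<in> \<C> \<times> \<D>" "letter (w ! Suc j) \<in> \<C> \<times> \<D>"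
      using accepting_run_pair_delta_inner(2,3)[OF runs(1) 3(2)] letters by auto
    with meet accepting_run_pair_delta_inner(1)[OF runs(1) 3(2)]
      accepting_run_pair_delta_inner(1)[OF runs(2) 3(2)]
    show ?thesis
      unfolding 3(1) meets_in_at_most_one_def by (auto simp: mem_Times_iff)
  qed
qed

theorem ufa_pair_delta:
  assumes "finite Q" "q \<in> Q" "\<C> \<subseteq> Pow Q" "\<D> \<subseteq> Pow Q" "{q} \<in> \<C>" "{q} \<in> \<D>"
    and meet: "meets_in_at_most_one \<C> \<D>"
    and "finite \<Sigma>" and letters: "letter ` \<Sigma> = \<C> \<times> \<D>"
  defines "\<delta> \<equiv> pair_delta \<Sigma> letter"
  shows "ufa Q \<Sigma> \<delta> {q} {q}"
    and "card \<C> \<le> card (forward_det_states \<Sigma> \<delta> {q})"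
    and "card \<D> \<le> card (backward_det_states \<Sigma> \<delta> {q})"
proof -
  have nfa: "nfa Q \<Sigma> \<delta> {q} {q}"
    using assms pair_delta_subset[of letter \<Sigma> Q] by (auto simp: nfa_def)
  then show "ufa Q \<Sigma> \<delta> {q} {q}"
    using accepting_runs_pair_delta_unique[OF meet equalityD1[OF letters]]
    by (auto simp: ufa_def \<delta>_def)
  have "\<C> \<subseteq> forward_det_states \<Sigma> \<delta> {q}"
  proof
    fix A assume "A \<in> \<C>"
    with \<open>{q} \<in> \<D>\<close> have "(A, {q}) \<in> letter ` \<Sigma>"
      by (simp add: letters)
    then obtain a where "a \<in> \<Sigma>" "letter a = (A, {q})"
      by (metis imageE)
    then show "A \<in> forward_det_states \<Sigma> \<delta> {q}"
      using fst_letter_in_forward_det_states[of a \<Sigma> "{q}" letter] by (simp add: \<delta>_def)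
  qed
  then show "card \<C> \<le> card (forward_det_states \<Sigma> \<delta> {q})"
    by (rule card_mono[OF finite_forward_det_states[OF nfa]])
  have "\<D> \<subseteq> backward_det_states \<Sigma> \<delta> {q}"
  proof
    fix B assume "B \<in> \<D>"
    with \<open>{q} \<in> \<C>\<close> have "({q}, B) \<in> letter ` \<Sigma>"
      by (simp add: letters)
    then obtain a where "a \<in> \<Sigma>" "letter a = ({q}, B)"
      by (metis imageE)
    then show "B \<in> backward_det_states \<Sigma> \<delta> {q}"
      using snd_letter_in_backward_det_states[of a \<Sigma> "{q}" letter] by (simp add: \<delta>_def)
  qed
  then show "card \<D> \<le> card (backward_det_states \<Sigma> \<delta> {q})"
    by (rule card_mono[OF finite_backward_det_states[OF nfa]])
qed

theorem ex_ufa_meets_in_at_most_one: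
  assumes "finite V" "v \<in> V" "\<C> \<subseteq> Pow V" "\<D> \<subseteq> Pow V" "{v} \<in> \<C>" "{v} \<in> \<D>"
    and meet: "meets_in_at_most_one \<C> \<D>"
  shows "\<exists>(Q :: nat set) (\<Sigma> :: nat set) \<delta> I F.
           ufa Q \<Sigma> \<delta> I F \<and> card Q = card V \<and>
           card (forward_det_states \<Sigma> \<delta> I) \<ge> card \<C> \<and>
           card (backward_det_states \<Sigma> \<delta> F) \<ge> card \<D>"
proof -
  obtain f where f: "bij_betw f V {0..<card V}"
    using ex_bij_betw_finite_nat \<open>finite V\<close> by metis
  then have inj: "inj_on f V" and image: "f ` V = {0..<card V}"
    by (auto simp: bij_betw_def)
  define \<C>' where "\<C>' = (`) f ` \<C>"
  define \<D>' where "\<D>' = (`) f ` \<D>"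
  have families: "\<C>' \<subseteq> Pow {0..<card V}" "\<D>' \<subseteq> Pow {0..<card V}"
    unfolding \<C>'_def \<D>'_def image[symmetric] using assms(3,4) by (auto intro!: image_mono)
  define \<Sigma> where "\<Sigma> = {0..<card (\<C>' \<times> \<D>')}"
  have "finite (\<C>' \<times> \<D>')"
    using families by (auto intro: finite_subset)
  then obtain letter :: "nat \<Rightarrow> nat set \<times> nat set" where letters: "letter ` \<Sigma> = \<C>' \<times> \<D>'"
    unfolding \<Sigma>_def using ex_bij_betw_nat_finite bij_betw_imp_surj_on by metis
  have "f v \<in> {0..<card V}" "{f v} \<in> \<C>'" "{f v} \<in> \<D>'"
    using image assms(2,5,6) by (auto simp: \<C>'_def \<D>'_def image_iff intro!: bexI[of _ "{v}"])
  moreover have "meets_in_at_most_one \<C>' \<D>'"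
    unfolding \<C>'_def \<D>'_def using meets_in_at_most_one_image[OF meet inj assms(3,4)] .
  ultimately have "ufa {0..<card V} \<Sigma> (pair_delta \<Sigma> letter) {f v} {f v}"
    and "card \<C>' \<le> card (forward_det_states \<Sigma> (pair_delta \<Sigma> letter) {f v})"
    and "card \<D>' \<le> card (backward_det_states \<Sigma> (pair_delta \<Sigma> letter) {f v})"
    using ufa_pair_delta[OF finite_atLeastLessThan _ families _ _ _ _ letters]
    by (simp_all add: \<Sigma>_def)
  moreover have "card \<C>' = card \<C>" "card \<D>' = card \<D>"
    unfolding \<C>'_def \<D>'_def using inj_on_subset[OF inj_on_image_Pow[OF inj]] assms(3,4)
    by (auto intro: card_image)
  ultimately show ?thesis
    by (intro exI[of _ "{0..<card V}"] exI[of _ \<Sigma>] exI[of _ "pair_delta \<Sigma> letter"]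
        exI[of _ "{f v}"]) simp
qed

theorem lemma3:
  fixes V :: "'v set" and E :: "'v set set"
  assumes "simple_graph V E"
  shows "\<exists>(Q :: nat set) (\<Sigma> :: nat set) \<delta> I F.
           ufa Q \<Sigma> \<delta> I F \<and> card Q = card V \<and>
           card (forward_det_states \<Sigma> \<delta> I) \<ge> card {X. is_clique V E X} \<and>
           card (backward_det_states \<Sigma> \<delta> F) \<ge> card {Y. is_coclique V E Y}"
proof (cases "V = {}")
  case True
  have "ufa {} ({} :: nat set) {} {} ({} :: nat set)"
    by (auto simp: ufa_def nfa_def accepting_run_def)
  moreover have "forward_det_states ({} :: nat set) {} {} = {{} :: nat set}"
    and "backward_det_states ({} :: nat set) {} {} = {{} :: nat set}"
    by (auto simp: forward_det_states_def backward_det_states_def delta_set_def delta_inv_def)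
  moreover have "{X. is_clique V E X} = {{}}" and "{Y. is_coclique V E Y} = {{}}"
    using True by (auto simp: is_clique_def is_coclique_def)
  ultimately show ?thesis
    using True by (intro exI[of _ "{}"]) simp
next
  case False
  then obtain v where "v \<in> V" by blast
  moreover have "finite V"
    using assms by (simp add: simple_graph_def)
  moreover have "is_clique V E {v}" "is_coclique V E {v}"
    using \<open>v \<in> V\<close> by (auto simp: is_clique_def is_coclique_def)
  ultimately show ?thesis
    using meets_in_at_most_one_cliques_cocliques
    by (intro ex_ufa_meets_in_at_most_one) (auto simp: is_clique_def is_coclique_def)
qed

end
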